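(* Let $D$ be a 2-connected rooted digraph with root $r$. Then there exists a spanning subdigraph $A$ of $D$ which is acyclic, in which every vertex is reachable from $r$ by a directed path, and which contains at least half of the arcs of $D-r$ (the arcs of $D$ not incident to $r$).
   Context: A rooted digraph is a loopless digraph $D$ with a distinguished vertex $r$ (the root) such that: there is no arc $(u,r)$ for any $u\in V(D)$; there is no arc $(x,y)$ with $x\neq r$ and $y$ an outneighbour of $r$; and $r$ has outdegree at least 2. A cut of a rooted digraph $D$ is a set $S\subseteq V(D)\setminus\{r\}$ such that some vertex $z\notin S$ is not the endpoint of any directed path starting at $r$ in $D-S$. $D$ is 2-connected if it has no cut of size at most 1. *)

theory Defs
  imports "Graph_Theory.Graph_Theory"
begin

definition rooted_digraph :: "('a,'b) pre_digraph \<Rightarrow> 'a \<Rightarrow> bool" where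
  "rooted_digraph D r \<equiv>
     fin_digraph D \<and> loopfree_digraph D \<and> r \<in> verts D \<and>
     (\<forall>e \<in> arcs D. head D e \<noteq> r) \<and>
     (\<forall>e \<in> arcs D. tail D e \<noteq> r \<longrightarrow> \<not> (r \<rightarrow>\<^bsub>D\<^esub> head D e)) \<and>
     2 \<le> out_degree D r"

definition is_cut :: "('a,'b) pre_digraph \<Rightarrow> 'a \<Rightarrow> 'a set \<Rightarrow> bool" where
  "is_cut D r S \<equiv> S \<subseteq> verts D - {r} \<and>
     (\<exists>z \<in> verts D - S. \<not> (r \<rightarrow>\<^sup>*\<^bsub>D \<restriction> (verts D - S)\<^esub> z))"

definition two_connected :: "('a,'b) pre_digraph \<Rightarrow> 'a \<Rightarrow> bool" where
  "two_connected D r \<equiv> \<not> (\<exists>S. is_cut D r S \<and> card S \<le> 1)"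

definition acyclic_digraph :: "('a,'b) pre_digraph \<Rightarrow> bool" where
  "acyclic_digraph A \<equiv> \<not> (\<exists>p. pre_digraph.cycle A p)"

end

theory Submission
  imports Defs
begin

(*
  Order the non-root vertices as v_1, ..., v_n so that every v_i has an in-neighbour among
  r, v_1, ..., v_(i-1) and one among r, v_(i+1), ..., v_n. Such an order is built greedily:
  if L is the set of vertices placed so far, the next vertex must have an in-arc from L and
  its removal must keep the unplaced vertices reachable from r. By 2-connectivity, among the
  unplaced vertices with an in-arc from L, one dominating the fewest unplaced vertices
  dominates none. Ranking r lowest and the other vertices by the order, or by the reversed
  order, the rank-increasing arcs form two acyclic spanning subgraphs in which every vertex
  is reachable from r. Every arc of D - r increases one of the two ranks, so one of the two
  subgraphs contains at least half of these arcs.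
*)

inductive_set reach_within :: "('a,'b) pre_digraph \<Rightarrow> 'a set \<Rightarrow> 'a set \<Rightarrow> 'a set"
  for G S X where
  source: "x \<in> X \<Longrightarrow> x \<in> S \<Longrightarrow> x \<in> reach_within G S X"
| step: "u \<in> reach_within G S X \<Longrightarrow> e \<in> arcs G \<Longrightarrow> tail G e = u \<Longrightarrow> head G e \<in> S
    \<Longrightarrow> head G e \<in> reach_within G S X"

definition in_arc_from :: "('a,'b) pre_digraph \<Rightarrow> 'a set \<Rightarrow> 'a \<Rightarrow> bool" where
  "in_arc_from G X v \<longleftrightarrow> (\<exists>e \<in> arcs G. tail G e \<in> X \<and> head G e = v)"

lemma in_arc_from_mono: "in_arc_from G X v \<Longrightarrow> X \<subseteq> Y \<Longrightarrow> in_arc_from G Y v"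
  unfolding in_arc_from_def by blast

lemma reach_within_subset: "reach_within G S X \<subseteq> S"
  by (auto elim: reach_within.induct)

lemma reach_within_mono:
  assumes "S \<subseteq> S'" "X \<subseteq> X'"
  shows "reach_within G S X \<subseteq> reach_within G S' X'"
proof
  fix w assume "w \<in> reach_within G S X"
  then show "w \<in> reach_within G S' X'"
    by induction (use assms in \<open>auto intro: reach_within.intros\<close>)
qed

lemma reach_within_first_entry:
  assumes "w \<in> reach_within G S X"
  obtains "w \<in> reach_within G (S - T) X"
    | "X \<inter> S \<inter> T \<noteq> {}"
    | e where "e \<in> arcs G" "tail G e \<in> reach_within G (S - T) X" "head G e \<in> S \<inter> T"
proof -
  from assms have "w \<in> reach_within G (S - T) X \<or> X \<inter> S \<inter> T \<noteq> {}
      \<or> (\<exists>e \<in> arcs G. tail G e \<in> reach_within G (S - T) X \<and> head G e \<in> S \<inter> T)"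
  proof induction
    case (source x)
    then show ?case by (cases "x \<in> T") (auto intro: reach_within.source)
  next
    case (step u e)
    show ?case
    proof (cases "head G e \<in> T")
      case True
      with step show ?thesis by blast
    next
      case False
      with step reach_within.step[of u G "S - T" X e] show ?thesis by blast
    qed
  qed
  with that show thesis by blast
qed

lemma in_arc_from_reach_within:
  assumes "w \<in> reach_within G S X" "w \<notin> X"
  shows "in_arc_from G (reach_within G (S - {w}) X) w"
  using assms(1)
proof (cases rule: reach_within_first_entry[where T = "{w}"])
  case 1
  then show ?thesis using reach_within_subset by fastforce
next
  case 2
  then show ?thesis using assms(2) by blast
next
  case (3 e)
  then show ?thesis unfolding in_arc_from_def by blast
qed

lemma ex_in_arc_from_if_reach_within:
  assumes "w \<in> Z" "w \<in> reach_within G (L \<union> Z) L" "L \<inter> Z = {}"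
  shows "\<exists>z \<in> Z. in_arc_from G L z"
  using assms(2)
proof (cases rule: reach_within_first_entry[where T = Z])
  case 1
  then show ?thesis using assms(1) reach_within_subset by fastforce
next
  case 2
  then show ?thesis using assms(3) by blast
next
  case (3 e)
  then have "tail G e \<in> L" using reach_within_subset by fastforce
  with 3 show ?thesis unfolding in_arc_from_def by blast
qed

lemma reach_within_one_avoids_other:
  assumes "w \<in> reach_within G S X" "v \<noteq> w"
  shows "w \<in> reach_within G (S - {v}) X \<or> v \<in> reach_within G (S - {w}) X"
  using assms(1)
proof (cases rule: reach_within_first_entry[where T = "{v, w}"])
  case 1
  then show ?thesis using reach_within_mono[of "S - {v, w}" "S - {v}" X X G] by blast
next
  case 2
  then obtain x where "x \<in> X" "x \<in> S" "x = v \<or> x = w" by blast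
  then show ?thesis
    using assms(2) reach_within.source[of x X "S - {v}" G] reach_within.source[of x X "S - {w}" G]
    by blast
next
  case (3 e)
  have "reach_within G (S - {v, w}) X \<subseteq> reach_within G (S - {u}) X" if "u \<in> {v, w}" for u
    by (rule reach_within_mono) (use that in auto)
  then have "tail G e \<in> reach_within G (S - {u}) X" if "u \<in> {v, w}" for u
    using 3(2) that by blast
  moreover have "head G e \<in> S - {v} \<and> head G e = w \<or> head G e \<in> S - {w} \<and> head G e = v"
    using 3(3) assms(2) by blast
  ultimately show ?thesis
    using 3(1) reach_within.step[of "tail G e" G _ X e] by blast
qed

lemma reach_within_if_reachable:
  assumes "u \<rightarrow>\<^sup>*\<^bsub>G \<restriction> S\<^esub> w" "u \<in> X"
  shows "w \<in> reach_within G S X"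
proof -
  have "(u, w) \<in> rtrancl_on S (arcs_ends (G \<restriction> S))"
    using assms(1) by (simp add: reachable_def)
  then show ?thesis
  proof (induction rule: rtrancl_on_induct)
    case base
    then show ?case using assms(2) by (intro reach_within.source)
  next
    case (step y z)
    then obtain e where "e \<in> arcs G" "tail G e = y" "head G e = z" "z \<in> S"
      by (auto simp: arcs_ends_def arc_to_ends_def)
    with step.IH show ?case by (auto intro: reach_within.step)
  qed
qed

definition dominated_by :: "('a,'b) pre_digraph \<Rightarrow> 'a set \<Rightarrow> 'a set \<Rightarrow> 'a \<Rightarrow> 'a set" where
  "dominated_by G S X z = {w \<in> S - {z}. w \<notin> reach_within G (S - {z}) X}"

lemma dominated_by_psubset:
  assumes q: "q \<in> dominated_by G S X z" and q_reach: "q \<in> reach_within G S X"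
  shows "dominated_by G S X q \<subset> dominated_by G S X z"
proof -
  have q_avoid: "q \<in> S - {z}" "q \<notin> reach_within G (S - {z}) X"
    using q by (auto simp: dominated_by_def)
  have "w \<in> dominated_by G S X z" if w: "w \<in> dominated_by G S X q" for w
  proof -
    have w_avoid: "w \<in> S - {q}" "w \<notin> reach_within G (S - {q}) X"
      using w by (auto simp: dominated_by_def)
    have "w \<noteq> z"
      using reach_within_one_avoids_other[OF q_reach, of z] q_avoid w_avoid by auto
    moreover have "w \<notin> reach_within G (S - {z}) X"
    proof
      assume "w \<in> reach_within G (S - {z}) X"
      then show False
      proof (cases rule: reach_within_first_entry[where T = "{q}"])
        case 1
        then show False
          using w_avoid reach_within_mono[of "S - {z} - {q}" "S - {q}" X X G] by blast
      next
        case 2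
        then show False
          using q_avoid reach_within.source[of q X "S - {z}" G] by blast
      next
        case (3 e)
        then have "tail G e \<in> reach_within G (S - {z}) X"
          using reach_within_mono[of "S - {z} - {q}" "S - {z}" X X G] by blast
        then show False
          using 3 q_avoid reach_within.step[of "tail G e" G "S - {z}" X e] by blast
      qed
    qed
    ultimately show ?thesis
      using w_avoid by (auto simp: dominated_by_def)
  qed
  moreover have "q \<notin> dominated_by G S X q"
    by (simp add: dominated_by_def)
  ultimately show ?thesis
    using q by blast
qed

lemma dominated_by_subset: "dominated_by G S X z \<subseteq> S - X - {z}"
  unfolding dominated_by_def using reach_within.source[of _ X "S - {z}" G] by blast

lemma least_dominating_dominates_nothing:
  assumes "finite Z" "r \<notin> Z" "L \<inter> Z = {}" "z \<in> Z"
    and from_L_avoiding: "Z - {z} \<subseteq> reach_within G (L \<union> Z - {z}) L"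
    and from_r: "Z \<subseteq> reach_within G (insert r Z) {r}"
    and least: "\<And>y. y \<in> Z \<Longrightarrow> in_arc_from G L y \<Longrightarrow>
      card (dominated_by G (insert r Z) {r} z) \<le> card (dominated_by G (insert r Z) {r} y)"
  shows "dominated_by G (insert r Z) {r} z = {}"
proof (rule ccontr)
  let ?dom = "dominated_by G (insert r Z) {r}"
  have dom_z: "?dom z \<subseteq> Z - {z}"
    using dominated_by_subset \<open>r \<notin> Z\<close> by fastforce
  assume "?dom z \<noteq> {}"
  then obtain w where w: "w \<in> ?dom z" by blast
  with dom_z from_L_avoiding have "w \<in> reach_within G (L \<union> Z - {z}) L" by blast
  then show False
  proof (cases rule: reach_within_first_entry[where T = "?dom z"])
    case 1
    then show False using w reach_within_subset by fastforce
  next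
    case 2
    then show False using dom_z \<open>L \<inter> Z = {}\<close> by blast
  next
    case (3 e)
    have tail_e: "tail G e \<in> L \<union> Z - {z} - ?dom z"
      using 3(2) reach_within_subset by (rule subsetD[rotated])
    have head_e: "head G e \<in> Z - {z}" "head G e \<in> ?dom z"
      using 3(3) dom_z by auto
    show False
    proof (cases "tail G e \<in> L")
      case True
      with 3(1) have "in_arc_from G L (head G e)"
        unfolding in_arc_from_def by blast
      moreover have "?dom (head G e) \<subset> ?dom z"
        using dominated_by_psubset[OF head_e(2)] head_e(1) from_r by blast
      then have "card (?dom (head G e)) < card (?dom z)"
        using \<open>finite Z\<close> dom_z by (meson finite_Diff finite_subset psubset_card_mono)
      ultimately show False using least head_e(1) by fastforce
    next
      case False
      with tail_e have "tail G e \<in> reach_within G (insert r Z - {z}) {r}"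
        by (auto simp: dominated_by_def)
      then have "head G e \<in> reach_within G (insert r Z - {z}) {r}"
        using 3(1) head_e(1) reach_within.step[of "tail G e" G _ "{r}" e] by blast
      then show False using head_e(2) by (simp add: dominated_by_def)
    qed
  qed
qed

lemma exists_removable_vertex:
  assumes "finite Z" "Z \<noteq> {}" "r \<notin> Z" "L \<inter> Z = {}"
    and "Z \<subseteq> reach_within G (L \<union> Z) L"
    and "\<And>u. u \<in> Z \<Longrightarrow> Z - {u} \<subseteq> reach_within G (L \<union> Z - {u}) L"
    and "Z \<subseteq> reach_within G (insert r Z) {r}"
  obtains z where "z \<in> Z" "in_arc_from G L z" "Z - {z} \<subseteq> reach_within G (insert r Z - {z}) {r}"
proof -
  let ?C = "{z \<in> Z. in_arc_from G L z}"
  obtain w where "w \<in> Z"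
    using assms(2) by blast
  then obtain c where "c \<in> ?C"
    using ex_in_arc_from_if_reach_within[OF _ _ assms(4)] assms(5) by blast
  then obtain z where z: "z \<in> ?C"
    and least: "\<And>y. y \<in> ?C \<Longrightarrow>
      card (dominated_by G (insert r Z) {r} z) \<le> card (dominated_by G (insert r Z) {r} y)"
    using ex_has_least_nat[of "\<lambda>y. y \<in> ?C" c "\<lambda>y. card (dominated_by G (insert r Z) {r} y)"]
    by blast
  then have "z \<in> Z" by blast
  then have "dominated_by G (insert r Z) {r} z = {}"
    using least_dominating_dominates_nothing[OF assms(1,3,4) \<open>z \<in> Z\<close> assms(6)[OF \<open>z \<in> Z\<close>] assms(7)]
      least by blast
  then have "Z - {z} \<subseteq> reach_within G (insert r Z - {z}) {r}"
    by (auto simp: dominated_by_def)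
  with z that show thesis by blast
qed

definition two_sided_order :: "('a,'b) pre_digraph \<Rightarrow> 'a \<Rightarrow> 'a set \<Rightarrow> 'a set \<Rightarrow> ('a \<Rightarrow> nat) \<Rightarrow> bool"
  where "two_sided_order G r L Z f \<longleftrightarrow> inj_on f Z \<and> (\<forall>z \<in> Z.
    in_arc_from G (L \<union> {u \<in> Z. f u < f z}) z \<and> in_arc_from G (insert r {u \<in> Z. f z < f u}) z)"

lemma two_sided_order_prepend:
  assumes order: "two_sided_order G r (insert z L) (Z - {z}) f"
    and "z \<in> Z" "r \<notin> Z" "in_arc_from G L z" "z \<in> reach_within G (insert r Z) {r}"
  shows "two_sided_order G r L Z (\<lambda>x. if x = z then 0 else Suc (f x))"
    (is "two_sided_order G r L Z ?f")
proof -
  have "inj_on ?f Z"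
    using order unfolding two_sided_order_def inj_on_def by auto
  moreover have "in_arc_from G (L \<union> {u \<in> Z. ?f u < ?f x}) x \<and> in_arc_from G (insert r {u \<in> Z. ?f x < ?f u}) x"
    if "x \<in> Z" for x
  proof (cases "x = z")
    case True
    have "in_arc_from G (reach_within G (insert r Z - {z}) {r}) z"
      using in_arc_from_reach_within assms(3,5) \<open>z \<in> Z\<close> by fastforce
    moreover have "reach_within G (insert r Z - {z}) {r} \<subseteq> insert r {u \<in> Z. ?f z < ?f u}"
      using reach_within_subset by fastforce
    ultimately show ?thesis
      using True in_arc_from_mono[OF \<open>in_arc_from G L z\<close>, of "L \<union> {u \<in> Z. ?f u < ?f z}"]
        in_arc_from_mono[of G _ z "insert r {u \<in> Z. ?f z < ?f u}"] by blast
  next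
    case False
    with that have x: "x \<in> Z - {z}" by blast
    have earlier: "insert z L \<union> {u \<in> Z - {z}. f u < f x} \<subseteq> L \<union> {u \<in> Z. ?f u < ?f x}"
      and later: "insert r {u \<in> Z - {z}. f x < f u} \<subseteq> insert r {u \<in> Z. ?f x < ?f u}"
      using \<open>z \<in> Z\<close> False by auto
    from order x have "in_arc_from G (insert z L \<union> {u \<in> Z - {z}. f u < f x}) x"
      and "in_arc_from G (insert r {u \<in> Z - {z}. f x < f u}) x"
      unfolding two_sided_order_def by blast+
    then show ?thesis
      using in_arc_from_mono[OF _ earlier] in_arc_from_mono[OF _ later] by blast
  qed
  ultimately show ?thesis
    unfolding two_sided_order_def by blast
qed

lemma exists_two_sided_order:
  assumes "finite Z" "r \<notin> Z" "L \<inter> Z = {}"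
    and "Z \<subseteq> reach_within G (L \<union> Z) L"
    and "\<And>u. u \<in> Z \<Longrightarrow> Z - {u} \<subseteq> reach_within G (L \<union> Z - {u}) L"
    and "Z \<subseteq> reach_within G (insert r Z) {r}"
  shows "\<exists>f. two_sided_order G r L Z f"
  using assms
proof (induction Z arbitrary: L rule: finite_remove_induct)
  case empty
  show ?case by (simp add: two_sided_order_def)
next
  case (remove Z L)
  obtain z where z: "z \<in> Z" "in_arc_from G L z"
    and removable: "Z - {z} \<subseteq> reach_within G (insert r Z - {z}) {r}"
    using exists_removable_vertex[OF remove.hyps(1,2) remove.prems] by blast
  have LZ: "insert z L \<union> (Z - {z}) = L \<union> Z" and "insert r Z - {z} = insert r (Z - {z})"
    using z(1) remove.prems(1) by auto
  have more_sources: "reach_within G S L \<subseteq> reach_within G S (insert z L)" for S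
    by (rule reach_within_mono) auto
  have "r \<notin> Z - {z}" "insert z L \<inter> (Z - {z}) = {}"
    using remove.prems(1,2) by auto
  moreover have "Z - {z} \<subseteq> reach_within G (insert z L \<union> (Z - {z})) (insert z L)"
    unfolding LZ using remove.prems(3) more_sources[of "L \<union> Z"] by blast
  moreover have "Z - {z} - {u} \<subseteq> reach_within G (insert z L \<union> (Z - {z}) - {u}) (insert z L)"
    if "u \<in> Z - {z}" for u
    unfolding LZ using remove.prems(4)[of u] that more_sources[of "L \<union> Z - {u}"] by blast
  moreover have "Z - {z} \<subseteq> reach_within G (insert r (Z - {z})) {r}"
    using removable \<open>insert r Z - {z} = insert r (Z - {z})\<close> by simp
  ultimately have "\<exists>f. two_sided_order G r (insert z L) (Z - {z}) f"
    by (rule remove.IH[OF z(1)])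
  then obtain f where "two_sided_order G r (insert z L) (Z - {z}) f"
    by blast
  moreover have "z \<in> reach_within G (insert r Z) {r}"
    using remove.prems(5) z(1) by blast
  ultimately show ?case
    using two_sided_order_prepend[OF _ z(1) remove.prems(1) z(2)] by blast
qed

definition rank_subgraph :: "('a,'b) pre_digraph \<Rightarrow> ('a \<Rightarrow> 'c::ord) \<Rightarrow> ('a,'b) pre_digraph" where
  "rank_subgraph D g = \<lparr>verts = verts D, arcs = {e \<in> arcs D. g (tail D e) < g (head D e)},
     tail = tail D, head = head D\<rparr>"

lemma rank_subgraph_simps [simp]:
  "verts (rank_subgraph D g) = verts D"
  "arcs (rank_subgraph D g) = {e \<in> arcs D. g (tail D e) < g (head D e)}"
  "tail (rank_subgraph D g) = tail D"
  "head (rank_subgraph D g) = head D"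
  by (simp_all add: rank_subgraph_def)

definition acyclic_spanning_rooted :: "('a,'b) pre_digraph \<Rightarrow> ('a,'b) pre_digraph \<Rightarrow> 'a \<Rightarrow> bool" where
  "acyclic_spanning_rooted A D r \<longleftrightarrow>
     spanning A D \<and> acyclic_digraph A \<and> (\<forall>v \<in> verts A. r \<rightarrow>\<^sup>*\<^bsub>A\<^esub> v)"

lemma spanning_rank_subgraph:
  assumes "wf_digraph D"
  shows "spanning (rank_subgraph D g) D"
proof -
  have "wf_digraph (rank_subgraph D g)"
    using assms unfolding wf_digraph_def by auto
  with assms show ?thesis
    unfolding spanning_def subgraph_def compatible_def by auto
qed

lemma rank_increases_along_walk:
  fixes g :: "'a \<Rightarrow> 'c::preorder"
  assumes "set p \<subseteq> arcs (rank_subgraph D g)" "pre_digraph.cas (rank_subgraph D g) u p v" "p \<noteq> []"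
  shows "g u < g v"
  using assms
proof (induction p arbitrary: u)
  case Nil
  then show ?case by simp
next
  case (Cons e p)
  then have e: "tail D e = u" "g u < g (head D e)"
    and rest: "set p \<subseteq> arcs (rank_subgraph D g)" "pre_digraph.cas (rank_subgraph D g) (head D e) p v"
    by (auto simp: pre_digraph.cas.simps)
  show ?case
  proof (cases "p = []")
    case True
    then show ?thesis using e rest by (simp add: pre_digraph.cas.simps)
  next
    case False
    then show ?thesis using Cons.IH[OF rest] e(2) less_trans by blast
  qed
qed

lemma acyclic_rank_subgraph:
  fixes g :: "'a \<Rightarrow> 'c::preorder"
  shows "acyclic_digraph (rank_subgraph D g)"
  unfolding acyclic_digraph_def
proof
  assume "\<exists>p. pre_digraph.cycle (rank_subgraph D g) p"
  then obtain p u where "pre_digraph.awalk (rank_subgraph D g) u p u" "p \<noteq> []"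
    unfolding pre_digraph.cycle_def by blast
  then have "g u < g u"
    using rank_increases_along_walk[of p D g u u] unfolding pre_digraph.awalk_def by blast
  then show False by simp
qed

lemma reachable_rank_subgraph:
  fixes g :: "'a \<Rightarrow> 'c::wellorder"
  assumes "wf_digraph D" "r \<in> verts D"
    and lower_in_arc: "\<And>v. v \<in> verts D - {r} \<Longrightarrow> in_arc_from D {u. g u < g v} v"
    and "v \<in> verts D"
  shows "r \<rightarrow>\<^sup>*\<^bsub>rank_subgraph D g\<^esub> v"
  using \<open>v \<in> verts D\<close>
proof (induction "g v" arbitrary: v rule: less_induct)
  case less
  show ?case
  proof (cases "v = r")
    case True
    then show ?thesis using assms(2) by (simp add: reachable_def)
  next
    case False
    with less.prems lower_in_arc obtain e where e: "e \<in> arcs D" "g (tail D e) < g v" "head D e = v"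
      unfolding in_arc_from_def by blast
    have "r \<rightarrow>\<^sup>*\<^bsub>rank_subgraph D g\<^esub> tail D e"
      using less.hyps[OF e(2)] e(1) wf_digraph.tail_in_verts[OF assms(1)] by blast
    moreover have "(tail D e, v) \<in> arcs_ends (rank_subgraph D g)"
      using e by (force simp: arcs_ends_def arc_to_ends_def)
    ultimately show ?thesis
      using less.prems unfolding reachable_def by (simp add: rtrancl_on_into_rtrancl_on)
  qed
qed

lemma acyclic_spanning_rooted_rank_subgraph:
  fixes g :: "'a \<Rightarrow> 'c::wellorder"
  assumes "wf_digraph D" "r \<in> verts D"
    and "\<And>v. v \<in> verts D - {r} \<Longrightarrow> in_arc_from D {u. g u < g v} v"
  shows "acyclic_spanning_rooted (rank_subgraph D g) D r"
  unfolding acyclic_spanning_rooted_def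
  using spanning_rank_subgraph[OF assms(1)] acyclic_rank_subgraph[of D g]
    reachable_rank_subgraph[OF assms] by blast

lemma reach_within_if_two_connected:
  assumes "two_connected D r" "S \<subseteq> verts D - {r}" "card S \<le> 1"
  shows "verts D - S \<subseteq> reach_within D (verts D - S) {r}"
proof
  fix z assume "z \<in> verts D - S"
  moreover have "\<not> is_cut D r S"
    using assms unfolding two_connected_def by blast
  ultimately have "r \<rightarrow>\<^sup>*\<^bsub>D \<restriction> (verts D - S)\<^esub> z"
    using assms(2) unfolding is_cut_def by blast
  then show "z \<in> reach_within D (verts D - S) {r}"
    by (rule reach_within_if_reachable) simp
qed

lemma two_connected_two_sided_order:
  assumes "rooted_digraph D r" "two_connected D r"
  defines "Z \<equiv> verts D - {r}"
  shows "\<exists>f. two_sided_order D r {r} Z f"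
proof -
  have "fin_digraph D" "r \<in> verts D"
    using assms(1) by (auto simp: rooted_digraph_def)
  then have "finite Z" "insert r Z = verts D" "{r} \<union> Z = verts D"
    unfolding Z_def by (auto simp: fin_digraph_def fin_digraph_axioms_def)
  moreover have "Z \<subseteq> reach_within D (verts D) {r}"
    using reach_within_if_two_connected[OF assms(2), of "{}"] unfolding Z_def by auto
  moreover have "Z - {u} \<subseteq> reach_within D (verts D - {u}) {r}" if "u \<in> Z" for u
    using reach_within_if_two_connected[OF assms(2), of "{u}"] that unfolding Z_def by auto
  ultimately show ?thesis
    using exists_two_sided_order[of Z r "{r}" D] unfolding Z_def by simp
qed

lemma two_sided_order_ranks:
  assumes "finite Z" "r \<notin> Z" "two_sided_order D r {r} Z f"
  obtains F B :: "'a \<Rightarrow> nat"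
  where "\<And>z. z \<in> Z \<Longrightarrow> in_arc_from D {u. F u < F z} z"
    and "\<And>z. z \<in> Z \<Longrightarrow> in_arc_from D {u. B u < B z} z"
    and "\<And>u v. u \<in> Z \<Longrightarrow> v \<in> Z \<Longrightarrow> u \<noteq> v \<Longrightarrow> F u < F v \<or> B u < B v"
proof -
  define M where "M = Max (f ` Z)"
  have f_le_M: "f z \<le> M" if "z \<in> Z" for z
    using assms(1) that by (simp add: M_def)
  define F where "F v = (if v = r then 0 else Suc (f v))" for v
  define B where "B v = (if v = r then 0 else Suc (M - f v))" for v
  have F_less_iff: "F u < F v \<longleftrightarrow> f u < f v" and B_less_iff: "B u < B v \<longleftrightarrow> f v < f u"
    if "u \<in> Z" "v \<in> Z" for u v
    using that assms(2) f_le_M[of u] f_le_M[of v] by (auto simp: F_def B_def)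
  have lower: "in_arc_from D {u. F u < F z} z \<and> in_arc_from D {u. B u < B z} z" if "z \<in> Z" for z
  proof -
    have "F r < F z" "B r < B z"
      using that assms(2) by (auto simp: F_def B_def)
    then have F_sub: "insert r {u \<in> Z. f u < f z} \<subseteq> {u. F u < F z}"
      and B_sub: "insert r {u \<in> Z. f z < f u} \<subseteq> {u. B u < B z}"
      using F_less_iff[OF _ that] B_less_iff[OF _ that] by auto
    have "in_arc_from D (insert r {u \<in> Z. f u < f z}) z"
      and "in_arc_from D (insert r {u \<in> Z. f z < f u}) z"
      using assms(3) that unfolding two_sided_order_def by auto
    then show ?thesis
      using in_arc_from_mono[OF _ F_sub] in_arc_from_mono[OF _ B_sub] by blast
  qed
  have F_or_B: "F u < F v \<or> B u < B v" if "u \<in> Z" "v \<in> Z" "u \<noteq> v" for u v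
  proof -
    have "f u \<noteq> f v"
      using assms(3) that unfolding two_sided_order_def inj_on_def by blast
    then show ?thesis
      using that F_less_iff B_less_iff by fastforce
  qed
  show thesis
    by (rule that[of F B]) (use lower F_or_B in blast)+
qed

lemma two_connected_covered_by_two_rank_subgraphs:
  assumes "rooted_digraph D r" "two_connected D r"
  obtains A B where "acyclic_spanning_rooted A D r" "acyclic_spanning_rooted B D r"
    "arcs (D \<restriction> (verts D - {r})) \<subseteq> arcs A \<union> arcs B"
proof -
  let ?Z = "verts D - {r}"
  have wf: "wf_digraph D" "r \<in> verts D" and "finite ?Z"
    and loopfree: "\<And>e. e \<in> arcs D \<Longrightarrow> tail D e \<noteq> head D e"
    using assms(1) by (auto simp: rooted_digraph_def fin_digraph_def fin_digraph_axioms_def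
        loopfree_digraph_def loopfree_digraph_axioms_def)
  obtain f where "two_sided_order D r {r} ?Z f"
    using two_connected_two_sided_order[OF assms] by blast
  with \<open>finite ?Z\<close> obtain F B :: "'a \<Rightarrow> nat"
    where F: "\<And>z. z \<in> ?Z \<Longrightarrow> in_arc_from D {u. F u < F z} z"
      and B: "\<And>z. z \<in> ?Z \<Longrightarrow> in_arc_from D {u. B u < B z} z"
      and F_or_B: "\<And>u v. u \<in> ?Z \<Longrightarrow> v \<in> ?Z \<Longrightarrow> u \<noteq> v \<Longrightarrow> F u < F v \<or> B u < B v"
    using two_sided_order_ranks[of ?Z r D f] by blast
  have "acyclic_spanning_rooted (rank_subgraph D F) D r"
    using acyclic_spanning_rooted_rank_subgraph[OF wf F] by blast
  moreover have "acyclic_spanning_rooted (rank_subgraph D B) D r"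
    using acyclic_spanning_rooted_rank_subgraph[OF wf B] by blast
  moreover have "arcs (D \<restriction> ?Z) \<subseteq> arcs (rank_subgraph D F) \<union> arcs (rank_subgraph D B)"
    using F_or_B loopfree by auto
  ultimately show thesis by (rule that)
qed

lemma card_le_twice_card_Int_of_cover:
  assumes "finite N" "N \<subseteq> A \<union> B"
  shows "card N \<le> 2 * card (A \<inter> N) \<or> card N \<le> 2 * card (B \<inter> N)"
proof -
  have "N = (A \<inter> N) \<union> (B \<inter> N)"
    using assms(2) by blast
  then have "card N \<le> card (A \<inter> N) + card (B \<inter> N)"
    by (metis card_Un_le)
  then show ?thesis by linarith
qed

theorem corollary1:
  fixes D :: "('a,'b) pre_digraph" and r :: 'a
  assumes "rooted_digraph D r"
    and "two_connected D r"
  shows "\<exists>A. spanning A D \<and> acyclic_digraph A \<and>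
             (\<forall>v \<in> verts A. r \<rightarrow>\<^sup>*\<^bsub>A\<^esub> v) \<and>
             card (arcs (D \<restriction> (verts D - {r}))) \<le> 2 * card (arcs A \<inter> arcs (D \<restriction> (verts D - {r})))"
proof -
  obtain A B where "acyclic_spanning_rooted A D r" "acyclic_spanning_rooted B D r"
    and cover: "arcs (D \<restriction> (verts D - {r})) \<subseteq> arcs A \<union> arcs B"
    using two_connected_covered_by_two_rank_subgraphs[OF assms] by blast
  moreover have "finite (arcs (D \<restriction> (verts D - {r})))"
    using assms(1) by (simp add: rooted_digraph_def fin_digraph_def fin_digraph_axioms_def)
  ultimately show ?thesis
    using card_le_twice_card_Int_of_cover[OF _ cover] unfolding acyclic_spanning_rooted_def by blast
qed

end
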